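(* There is a 2-player, 2-action, 1-state Markov game with horizon $2$ and a non-Markov (general) policy $\sigma_2$ for player 2 such that for all Markov policies $\sigma_1$ of player 1, $V_1^{\sigma_1\times\sigma_2}=1/2$, yet $\max_{\sigma_1}V_1^{\sigma_1\times\sigma_2}=3/4$, where the maximum is over all (randomized, possibly non-Markov) general policies $\sigma_1$ of player 1.
   Context: An $m$-player finite-horizon Markov game is $\mathcal{G}=(\mathcal{S},H,(\mathcal{A}_i)_{i\in[m]},\mathbb{P},(R_i)_{i\in[m]},\mu)$ with finite states, horizon $H$, finite action sets, transition kernels, deterministic rewards $R_{i,h}(s,\mathbf{a})\in[-1/H,1/H]$, and initial distribution $\mu$. In an episode agents choose actions simultaneously at each step, each agent $i$ observes its own reward $r_{i,h}=R_{i,h}(s_h,\mathbf{a}_h)$, and the state transitions. A general policy of agent $i$ maps its history $(s_1,a_{i,1},r_{i,1},\dots,s_{h-1},a_{i,h-1},r_{i,h-1})$ and current state $s_h$ to a distribution over its actions; a Markov policy depends only on $h$ and $s_h$. $V_1^{\sigma_1\times\sigma_2}$ is player 1's expected total reward when players independently follow $\sigma_1,\sigma_2$. *)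

theory Defs
  imports "HOL-Probability.Probability"
begin

text \<open>A 2-player Markov game with a single state (type unit), horizon H = 2 and
action sets bool for both players.  The transition kernel and the initial
distribution are the (unique) point masses on the single state.
Rewards: R i h a1 a2 for player i (1 or 2), step h (1 or 2).
Rewards are deterministic and bounded by 1/H = 1/2 in absolute value.\<close>

type_synonym rewards = "nat \<Rightarrow> nat \<Rightarrow> bool \<Rightarrow> bool \<Rightarrow> real"

definition valid_game :: "rewards \<Rightarrow> bool" where
  "valid_game R \<longleftrightarrow>
     (\<forall>i\<in>{1,2}. \<forall>h\<in>{1,2::nat}. \<forall>a1 a2. \<bar>R i h a1 a2\<bar> \<le> 1/2)"

text \<open>A general policy of a player maps its own history
(s_1,a_1,r_1,...,s_{h-1},a_{h-1},r_{h-1}) (a list of triples) and the current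
state s_h to a distribution over its actions.\<close>

type_synonym policy = "(unit \<times> bool \<times> real) list \<Rightarrow> unit \<Rightarrow> bool pmf"

definition markov_policy :: "policy \<Rightarrow> bool" where
  "markov_policy \<sigma> \<longleftrightarrow>
     (\<exists>f :: nat \<Rightarrow> unit \<Rightarrow> bool pmf. \<forall>hist s. \<sigma> hist s = f (length hist + 1) s)"

definition V1 :: "rewards \<Rightarrow> policy \<Rightarrow> policy \<Rightarrow> real" where
  "V1 R \<sigma>1 \<sigma>2 =
     measure_pmf.expectation (\<sigma>1 [] ()) (\<lambda>a1.
     measure_pmf.expectation (\<sigma>2 [] ()) (\<lambda>a2.
       R 1 1 a1 a2 +
       measure_pmf.expectation (\<sigma>1 [((), a1, R 1 1 a1 a2)] ()) (\<lambda>b1.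
       measure_pmf.expectation (\<sigma>2 [((), a2, R 2 1 a1 a2)] ()) (\<lambda>b2.
         R 1 2 b1 b2))))"

end

theory Submission
  imports Defs
begin

text \<open>At step 1 each player's reward reveals the other player's action, and player 2 then plays
the XOR of both first actions, while player 1 is paid 1/2 at step 2 for matching it. A
history-dependent player 1 learns both bits and always matches, earning 1/4 + 1/2. A Markov
player 1 chooses its second action independently of player 2's uniform first bit, so the XOR is
a fair coin independent of that choice and player 1 matches with probability exactly 1/2,
earning 1/4 + 1/4. No policy earns more than 1/4 at step 1 or more than 1/2 at step 2.\<close>

lemma integral_measure_pmf_bool:
  fixes f :: "bool \<Rightarrow> real"
  shows "measure_pmf.expectation p f = pmf p True * f True + pmf p False * f False"
  by (subst integral_measure_pmf_real[where A = UNIV]) (auto simp: UNIV_bool)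

lemma pmf_bool_not_add: "pmf p (\<not> b) + pmf p b = 1"
proof -
  have "(\<Sum>a\<in>UNIV. pmf p a) = 1"
    by (rule sum_pmf_eq_1) auto
  then show ?thesis
    by (cases b) (simp_all add: UNIV_bool)
qed

lemma integral_measure_pmf_bool_le_1:
  fixes f :: "bool \<Rightarrow> real"
  assumes "\<And>b. f b \<le> 1"
  shows "measure_pmf.expectation p f \<le> 1"
  by (rule measure_pmf.integral_le_const) (auto intro: integrable_measure_pmf_finite assms)

definition signalling_rewards :: rewards where
  "signalling_rewards i h a1 a2 =
     (if i = 1 \<and> h = 1 then (if a2 then 1/2 else 0)
      else if i = 2 \<and> h = 1 then (if a1 then 1/2 else 0)
      else if i = 1 \<and> h = 2 then (if a1 = a2 then 1/2 else 0)
      else 0)"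

definition xor_policy :: policy where
  "xor_policy hist s = (case hist of
       [] \<Rightarrow> bernoulli_pmf (1/2)
     | [(_, a2, r)] \<Rightarrow> return_pmf (a2 \<noteq> (r = 1/2))
     | _ \<Rightarrow> return_pmf True)"

definition matching_policy :: policy where
  "matching_policy hist s = (case hist of
       [] \<Rightarrow> return_pmf True
     | [(_, a1, r)] \<Rightarrow> return_pmf (a1 \<noteq> (r = 1/2))
     | _ \<Rightarrow> return_pmf True)"

text \<open>Player 2's step-2 action is \<open>\<not> a1\<close> if its first action was True and \<open>a1\<close> otherwise;
player 1's first reward is 1/2 resp. 0 in these two cases.\<close>

definition match_prob :: "policy \<Rightarrow> bool \<Rightarrow> real" where
  "match_prob \<sigma>1 a1 =
     (pmf (\<sigma>1 [((), a1, 1/2)] ()) (\<not> a1) + pmf (\<sigma>1 [((), a1, 0)] ()) a1) / 2"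

lemma valid_game_signalling_rewards: "valid_game signalling_rewards"
  by (auto simp: valid_game_def signalling_rewards_def)

lemma V1_xor_policy:
  "V1 signalling_rewards \<sigma>1 xor_policy =
     1/4 + measure_pmf.expectation (\<sigma>1 [] ()) (match_prob \<sigma>1) / 2"
  unfolding V1_def
  using pmf_bool_not_add[of "\<sigma>1 [] ()" True]
  by (simp add: integral_measure_pmf_bool signalling_rewards_def xor_policy_def match_prob_def
      field_simps)

lemma match_prob_le_1: "match_prob \<sigma>1 a1 \<le> 1"
  using pmf_le_1[of "\<sigma>1 [((), a1, 1/2)] ()" "\<not> a1"] pmf_le_1[of "\<sigma>1 [((), a1, 0)] ()" a1]
  by (simp add: match_prob_def)

lemma match_prob_markov:
  assumes "markov_policy \<sigma>1"
  shows "match_prob \<sigma>1 = (\<lambda>_. 1/2)"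
proof
  fix a1
  obtain f where f: "\<And>hist s. \<sigma>1 hist s = f (length hist + 1) s"
    using assms unfolding markov_policy_def by blast
  show "match_prob \<sigma>1 a1 = 1/2"
    unfolding match_prob_def f using pmf_bool_not_add[of "f (Suc 1) ()" a1] by simp
qed

lemma match_prob_matching_policy: "match_prob matching_policy = (\<lambda>_. 1)"
  by (simp add: fun_eq_iff match_prob_def matching_policy_def)

theorem proposition6p1:
  shows "\<exists>R \<sigma>2. valid_game R \<and>
           (\<forall>\<sigma>1. markov_policy \<sigma>1 \<longrightarrow> V1 R \<sigma>1 \<sigma>2 = 1/2) \<and>
           (\<exists>\<sigma>1. V1 R \<sigma>1 \<sigma>2 = 3/4) \<and>
           (\<forall>\<sigma>1. V1 R \<sigma>1 \<sigma>2 \<le> 3/4)"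
proof (intro exI conjI allI impI)
  show "valid_game signalling_rewards"
    by (rule valid_game_signalling_rewards)
next
  fix \<sigma>1 :: policy
  assume "markov_policy \<sigma>1"
  then show "V1 signalling_rewards \<sigma>1 xor_policy = 1/2"
    by (simp add: V1_xor_policy match_prob_markov)
next
  show "V1 signalling_rewards matching_policy xor_policy = 3/4"
    by (simp add: V1_xor_policy match_prob_matching_policy)
next
  fix \<sigma>1 :: policy
  have "measure_pmf.expectation (\<sigma>1 [] ()) (match_prob \<sigma>1) \<le> 1"
    by (rule integral_measure_pmf_bool_le_1) (rule match_prob_le_1)
  then show "V1 signalling_rewards \<sigma>1 xor_policy \<le> 3/4"
    by (simp add: V1_xor_policy)
qed

end
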